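(* Let $A\in\mathbb{R}^{m\times n}$ with $m<n$ have unit $\ell_2$-norm columns and mutual coherence $\mu=\mu(A)$. Let $x\in\mathbb{R}^n$ and $y\in\mathbb{R}^m$ satisfy $\|y-Ax\|_2\le\epsilon$. Let $k$ be a positive integer, let $x_k$ be the best $k$-term approximation of $x$, and let $T_0$ be its support. Let $T\subset[n]=\{1,\dots,n\}$ be an arbitrary set, and define $\rho\ge 0$ and $\alpha\in[0,1]$ by $|T|=\rho k$ and $|T\cap T_0|=\alpha\rho k$. Fix a weight $w\in[0,1]$ and let $x^*$ be a minimizer of $$\min_{z\in\mathbb{R}^n}\|z\|_{1,w}\quad\text{subject to}\quad \|y-Az\|_2\le\epsilon,$$ where $\|z\|_{1,w}=\sum_{i=1}^n w_i|z_i|$ with $w_i=w$ for $i\in T$ and $w_i=1$ for $i\notin T$. Suppose that $$k<\begin{cases}\left(\dfrac{1}{2\sqrt{\rho}\,(2w\sqrt{\alpha}+1)}\left(w+\sqrt{w^2+4(2w\sqrt{\alpha}+1)\left(1+\tfrac{1}{\mu}\right)}\right)\right)^2, & \text{if } w\in(0,1],\\[2ex] \dfrac{1}{\rho}\left(1+\dfrac{1}{\mu}\right), & \text{if } w=0.\end{cases}$$ Then $$\|x^*_T-x_T\|_2\le C_0\,\epsilon+C_1\Big(w\|x-x_k\|_1+(1-w)\|x_{T^c\cap T_0^c}\|_1+\|x_{T^c\cap T_0}\|_1\Big),$$ where $$C_0=\frac{2\sqrt{1+(\rho k-1)\mu}}{1+\mu+w\mu\sqrt{\rho k}-\mu\rho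 k(2w\sqrt{\alpha}+1)},\qquad C_1=\frac{2\mu\sqrt{\rho k}}{1+\mu+w\mu\sqrt{\rho k}-\mu\rho k(2w\sqrt{\alpha}+1)}.$$
   Context: The mutual coherence of a matrix $A$ with columns $a_1,\dots,a_n$ is $\mu(A)=\max_{i\neq j}\frac{|a_i^Ta_j|}{\|a_i\|_2\|a_j\|_2}$. The best $k$-term approximation $x_k$ of $x$ keeps (at most) $k$ largest-magnitude coordinates of $x$ and sets the rest to zero. For a vector $v\in\mathbb{R}^n$ and a set $S\subseteq[n]$, $v_S$ denotes the restriction of $v$ to the coordinates in $S$ (equivalently, the vector agreeing with $v$ on $S$ and zero elsewhere); $S^c=[n]\setminus S$. *)

theory Defs
  imports "HOL-Analysis.Analysis"
begin

definition mutual_coherence :: "real^'n^'m \<Rightarrow> real" where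
  "mutual_coherence A =
     Max {\<bar>column i A \<bullet> column j A\<bar> / (norm (column i A) * norm (column j A)) | i j. i \<noteq> j}"

definition restrict_vec :: "real^'n \<Rightarrow> 'n set \<Rightarrow> real^'n" where
  "restrict_vec v S = (\<chi> i. if i \<in> S then v $ i else 0)"

definition l1norm :: "real^'n \<Rightarrow> real" where
  "l1norm v = (\<Sum>i\<in>UNIV. \<bar>v $ i\<bar>)"

definition wl1norm :: "real \<Rightarrow> 'n set \<Rightarrow> real^'n \<Rightarrow> real" where
  "wl1norm w T v = (\<Sum>i\<in>UNIV. (if i \<in> T then w else 1) * \<bar>v $ i\<bar>)"

definition best_k_term :: "real^'n \<Rightarrow> nat \<Rightarrow> real^'n \<Rightarrow> bool" where
  "best_k_term x k xk \<longleftrightarrow>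
     (\<exists>S. card S = min k CARD('n) \<and>
          (\<forall>i\<in>S. \<forall>j. j \<notin> S \<longrightarrow> \<bar>x $ j\<bar> \<le> \<bar>x $ i\<bar>) \<and>
          xk = restrict_vec x S)"

definition supp_vec :: "real^'n \<Rightarrow> 'n set" where
  "supp_vec v = {i. v $ i \<noteq> 0}"

end

theory Submission
  imports Defs
begin

text \<open>Write h = xstar - x. As x and xstar are both feasible, ||A h||_2 <= 2 eps, and the weighted
  l1 minimality of xstar gives the cone constraint
  ||h||_1 <= (1 - w) ||h_T||_1 + 2 w ||h_(T inter T0)||_1 + 2 P, with P the tail term of the bound.
  Unit columns of coherence mu make the Gram matrix of A the identity up to off-diagonal entries of
  size at most mu, so testing h_T against h gives
  ||h_T||_2^2 - mu (||h_T||_1 ||h||_1 - ||h_T||_2^2) <= <A h_T, A h>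
    <= sqrt (1 + (|T| - 1) mu) ||h_T||_2 2 eps.
  Inserting the cone constraint and ||v||_1 <= sqrt |S| ||v||_2 for v supported on S (with S = T and
  S = T inter T0) leaves D ||h_T||_2 <= 2 sqrt (1 + (|T| - 1) mu) eps + 2 mu sqrt |T| P, and the
  bound on k says exactly that sqrt k lies below the positive root of the quadratic in sqrt k
  that makes D positive.\<close>

lemma restrict_vec_nth [simp]: "restrict_vec v S $ i = (if i \<in> S then v $ i else 0)"
  by (simp add: restrict_vec_def)

lemma l1norm_restrict_vec: "l1norm (restrict_vec v S) = (\<Sum>i\<in>S. \<bar>v $ i\<bar>)"
  by (simp add: l1norm_def if_distrib sum.If_cases)

lemma norm_restrict_vec: "norm (restrict_vec v S) = sqrt (\<Sum>i\<in>S. (v $ i)\<^sup>2)"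
  unfolding norm_vec_def L2_set_def
  by (simp add: if_distrib[of "\<lambda>t. (norm t)\<^sup>2"] if_distrib[of "\<lambda>t. t\<^sup>2"] sum.If_cases)

lemma norm_restrict_vec_mono:
  assumes "S \<subseteq> T" shows "norm (restrict_vec v S) \<le> norm (restrict_vec v T)"
  unfolding norm_restrict_vec using assms by (intro real_sqrt_le_mono sum_mono2) auto

lemma l1norm_restrict_vec_le:
  "l1norm (restrict_vec v S) \<le> sqrt (card S) * norm (restrict_vec v S)"
proof -
  have "(\<Sum>i\<in>S. \<bar>v $ i\<bar> * \<bar>1\<bar>) \<le> L2_set (\<lambda>i. v $ i) S * L2_set (\<lambda>_. 1) S"
    by (rule L2_set_mult_ineq)
  then show ?thesis
    by (simp add: l1norm_restrict_vec norm_restrict_vec L2_set_constant L2_set_def mult.commute)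
qed

lemma exists_distinct_of_card_gt_1:
  assumes "1 < CARD('n)"
  obtains i j :: 'n where "i \<noteq> j"
proof -
  have "\<not> (\<forall>i j :: 'n. i = j)"
  proof
    assume "\<forall>i j :: 'n. i = j"
    then have "(UNIV :: 'n set) = {undefined}" by auto
    then show False using assms by (metis card.empty card_insert_disjoint empty_iff finite.emptyI
        less_irrefl One_nat_def)
  qed
  then show thesis using that by blast
qed

lemma finite_mutual_coherence_set:
  fixes A :: "real^'n^'m"
  shows "finite {\<bar>column i A \<bullet> column j A\<bar> / (norm (column i A) * norm (column j A)) | i j. i \<noteq> j}"
  by (rule finite_subset[of _ "range (\<lambda>(i, j).
        \<bar>column i A \<bullet> column j A\<bar> / (norm (column i A) * norm (column j A)))"]) auto

lemma abs_inner_column_le_mutual_coherence: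
  fixes A :: "real^'n^'m"
  assumes "i \<noteq> j"
  shows "\<bar>column i A \<bullet> column j A\<bar> / (norm (column i A) * norm (column j A))
           \<le> mutual_coherence A"
  unfolding mutual_coherence_def
  using assms by (intro Max_ge finite_mutual_coherence_set) blast

lemma mutual_coherence_nonneg:
  fixes A :: "real^'n^'m"
  assumes "1 < CARD('n)"
  shows "0 \<le> mutual_coherence A"
proof -
  obtain i j :: 'n where "i \<noteq> j"
    using exists_distinct_of_card_gt_1 assms by blast
  then show ?thesis
    using abs_inner_column_le_mutual_coherence[of i j A] by (simp add: order_trans[rotated])
qed

lemma mutual_coherence_le_1:
  fixes A :: "real^'n^'m"
  assumes "1 < CARD('n)"
  shows "mutual_coherence A \<le> 1"
  unfolding mutual_coherence_def
proof (rule Max.boundedI)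
  obtain i j :: 'n where "i \<noteq> j"
    using exists_distinct_of_card_gt_1 assms by blast
  then show "{\<bar>column i A \<bullet> column j A\<bar> / (norm (column i A) * norm (column j A)) | i j. i \<noteq> j} \<noteq> {}"
    by blast
next
  fix a assume "a \<in> {\<bar>column i A \<bullet> column j A\<bar> / (norm (column i A) * norm (column j A)) | i j. i \<noteq> j}"
  then show "a \<le> 1"
    by (auto simp: divide_le_eq_1 Cauchy_Schwarz_ineq2)
qed (rule finite_mutual_coherence_set)

lemma inner_matrix_vector_mult:
  fixes A :: "real^'n^'m"
  shows "(A *v u) \<bullet> (A *v v) = (\<Sum>i\<in>UNIV. \<Sum>j\<in>UNIV. u$i * v$j * (column i A \<bullet> column j A))"
  unfolding matrix_mult_sum
  by (simp add: inner_sum_left inner_sum_right scalar_mult_eq_scaleR sum_distrib_left mult_ac)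
     (rule sum.swap)

lemma abs_inner_matrix_vector_mult_sub_le:
  fixes A :: "real^'n^'m"
  assumes unit: "\<And>i. norm (column i A) = 1"
    and coh: "\<And>i j. i \<noteq> j \<Longrightarrow> \<bar>column i A \<bullet> column j A\<bar> \<le> \<mu>"
  shows "\<bar>(A *v u) \<bullet> (A *v v) - u \<bullet> v\<bar>
           \<le> \<mu> * (l1norm u * l1norm v - (\<Sum>i\<in>UNIV. \<bar>u $ i\<bar> * \<bar>v $ i\<bar>))"
proof -
  define G where "G i j = column i A \<bullet> column j A - (if i = j then 1 else 0)" for i j
  have G_le: "\<bar>G i j\<bar> \<le> (if i = j then 0 else \<mu>)" for i j
    using coh[of i j] unit[of i] by (cases "i = j") (simp_all add: G_def flip: power2_norm_eq_inner)
  have "u \<bullet> v = (\<Sum>i\<in>UNIV. \<Sum>j\<in>UNIV. u $ i * v $ j * (if i = j then 1 else 0))"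
    by (simp add: inner_vec_def mult_delta_right sum.delta)
  then have "(A *v u) \<bullet> (A *v v) - u \<bullet> v = (\<Sum>i\<in>UNIV. \<Sum>j\<in>UNIV. u $ i * v $ j * G i j)"
    by (simp add: G_def inner_matrix_vector_mult right_diff_distrib sum_subtractf)
  also have "\<bar>\<dots>\<bar> \<le> (\<Sum>i\<in>UNIV. \<Sum>j\<in>UNIV. \<bar>u $ i\<bar> * \<bar>v $ j\<bar> * (if i = j then 0 else \<mu>))"
    by (intro order_trans[OF sum_abs] sum_mono order_trans[OF sum_abs])
      (simp add: abs_mult mult_left_mono G_le)
  also have "\<dots> = \<mu> * ((\<Sum>i\<in>UNIV. \<Sum>j\<in>UNIV. \<bar>u $ i\<bar> * \<bar>v $ j\<bar>)
                       - (\<Sum>i\<in>UNIV. \<bar>u $ i\<bar> * \<bar>v $ i\<bar>))"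
    by (simp add: if_distrib[of "\<lambda>t. _ * t"] sum.If_cases sum_subtractf sum_distrib_left
        right_diff_distrib Diff_eq[symmetric] sum_diff1 mult_ac)
  also have "\<dots> = \<mu> * (l1norm u * l1norm v - (\<Sum>i\<in>UNIV. \<bar>u $ i\<bar> * \<bar>v $ i\<bar>))"
    by (simp add: l1norm_def sum_product)
  finally show ?thesis .
qed

lemma norm_matrix_vector_mult_restrict_le:
  fixes A :: "real^'n^'m"
  assumes unit: "\<And>i. norm (column i A) = 1"
    and coh: "\<And>i j. i \<noteq> j \<Longrightarrow> \<bar>column i A \<bullet> column j A\<bar> \<le> \<mu>"
    and "0 \<le> \<mu>"
  shows "norm (A *v restrict_vec v S)
           \<le> sqrt (1 + (real (card S) - 1) * \<mu>) * norm (restrict_vec v S)"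
proof -
  define u where "u = restrict_vec v S"
  have "(\<Sum>i\<in>UNIV. \<bar>u $ i\<bar> * \<bar>u $ i\<bar>) = (norm u)\<^sup>2"
    by (simp add: power2_norm_eq_inner inner_vec_def)
  then have "(norm (A *v u))\<^sup>2 \<le> (norm u)\<^sup>2 + \<mu> * ((l1norm u)\<^sup>2 - (norm u)\<^sup>2)"
    using abs_inner_matrix_vector_mult_sub_le[OF unit coh, of u u]
    by (simp add: abs_le_iff power2_eq_square flip: power2_norm_eq_inner)
  also have "\<dots> \<le> (norm u)\<^sup>2 + \<mu> * (real (card S) * (norm u)\<^sup>2 - (norm u)\<^sup>2)"
  proof -
    have "(l1norm u)\<^sup>2 \<le> (sqrt (card S) * norm u)\<^sup>2"
      using l1norm_restrict_vec_le[of v S] by (intro power_mono) (auto simp: u_def l1norm_def)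
    then show ?thesis
      using \<open>0 \<le> \<mu>\<close> by (simp add: mult_left_mono power_mult_distrib)
  qed
  also have "\<dots> = (1 + (real (card S) - 1) * \<mu>) * (norm u)\<^sup>2"
    by (simp add: algebra_simps)
  finally have "sqrt ((norm (A *v u))\<^sup>2) \<le> sqrt ((1 + (real (card S) - 1) * \<mu>) * (norm u)\<^sup>2)"
    by (rule real_sqrt_le_mono)
  then show ?thesis
    by (simp add: u_def real_sqrt_mult)
qed

lemma l1norm_le_of_wl1norm_le:
  fixes x h :: "real^'n"
  assumes w: "0 \<le> w" "w \<le> 1"
    and le: "wl1norm w T (x + h) \<le> wl1norm w T x"
  shows "l1norm h \<le> (1 - w) * l1norm (restrict_vec h T) + 2 * w * l1norm (restrict_vec h (T \<inter> T0))
                      + 2 * (w * l1norm (restrict_vec x (T - T0)) + l1norm (restrict_vec x (- T)))"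
proof -
  define q where "q i = (1 - w) * \<bar>restrict_vec h T $ i\<bar> + 2 * w * \<bar>restrict_vec h (T \<inter> T0) $ i\<bar>
      + 2 * (w * \<bar>restrict_vec x (T - T0) $ i\<bar> + \<bar>restrict_vec x (- T) $ i\<bar>)" for i
  define c where "c i = (if i \<in> T then w else 1)" for i
  have "\<bar>h $ i\<bar> - q i \<le> c i * \<bar>x $ i + h $ i\<bar> - c i * \<bar>x $ i\<bar>" for i
  proof -
    consider "i \<in> T" "i \<in> T0" | "i \<in> T" "i \<notin> T0" | "i \<notin> T" by blast
    then show ?thesis
    proof cases
      case 1
      have "w * - \<bar>h $ i\<bar> \<le> w * (\<bar>x $ i + h $ i\<bar> - \<bar>x $ i\<bar>)"
        using w by (intro mult_left_mono) auto
      with 1 show ?thesis by (simp add: q_def c_def algebra_simps)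
    next
      case 2
      have "w * (\<bar>h $ i\<bar> - 2 * \<bar>x $ i\<bar>) \<le> w * (\<bar>x $ i + h $ i\<bar> - \<bar>x $ i\<bar>)"
        using w by (intro mult_left_mono) auto
      with 2 show ?thesis by (simp add: q_def c_def algebra_simps)
    qed (auto simp: q_def c_def)
  qed
  then have "(\<Sum>i\<in>UNIV. \<bar>h $ i\<bar> - q i) \<le> wl1norm w T (x + h) - wl1norm w T x"
    unfolding wl1norm_def c_def by (force simp: sum_subtractf[symmetric] intro: sum_mono)
  with le show ?thesis
    by (simp add: q_def l1norm_def sum_subtractf sum.distrib sum_distrib_left)
qed

lemma l1norm_tail_restrict_vec_eq:
  assumes "xk = restrict_vec x S"
  shows "w * l1norm (x - xk) + (1 - w) * l1norm (restrict_vec x (- T \<inter> - supp_vec xk))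
           + l1norm (restrict_vec x (- T \<inter> supp_vec xk))
         = w * l1norm (restrict_vec x (T - supp_vec xk)) + l1norm (restrict_vec x (- T))"
proof -
  have "\<bar>(x - xk) $ i\<bar> = (if i \<in> supp_vec xk then 0 else \<bar>x $ i\<bar>)" for i
    using assms by (simp add: supp_vec_def)
  then show ?thesis
    unfolding l1norm_def
    by (simp add: sum_distrib_left sum.distrib[symmetric] algebra_simps) (auto intro!: sum.cong)
qed

lemma inner_restrict_vec_coherence_le:
  fixes A :: "real^'n^'m" and h :: "real^'n"
  assumes unit: "\<And>i. norm (column i A) = 1"
    and coh: "\<And>i j. i \<noteq> j \<Longrightarrow> \<bar>column i A \<bullet> column j A\<bar> \<le> \<mu>"
    and "0 \<le> \<mu>"
    and tube: "norm (A *v h) \<le> \<eta>"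
  shows "(norm (restrict_vec h T))\<^sup>2
           - \<mu> * (l1norm (restrict_vec h T) * l1norm h - (norm (restrict_vec h T))\<^sup>2)
         \<le> sqrt (1 + (real (card T) - 1) * \<mu>) * norm (restrict_vec h T) * \<eta>"
proof -
  have sq: "restrict_vec h T \<bullet> h = (norm (restrict_vec h T))\<^sup>2"
    "(\<Sum>i\<in>UNIV. \<bar>restrict_vec h T $ i\<bar> * \<bar>h $ i\<bar>) = (norm (restrict_vec h T))\<^sup>2"
    by (auto simp: power2_norm_eq_inner inner_vec_def intro!: sum.cong)
  have "(norm (restrict_vec h T))\<^sup>2
          - \<mu> * (l1norm (restrict_vec h T) * l1norm h - (norm (restrict_vec h T))\<^sup>2)
        \<le> (A *v restrict_vec h T) \<bullet> (A *v h)"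
    using abs_inner_matrix_vector_mult_sub_le[OF unit coh, of "restrict_vec h T" h]
    by (simp add: sq abs_le_iff del: restrict_vec_nth)
  also have "\<dots> \<le> norm (A *v restrict_vec h T) * norm (A *v h)"
    by (rule norm_cauchy_schwarz)
  also have "\<dots> \<le> sqrt (1 + (real (card T) - 1) * \<mu>) * norm (restrict_vec h T) * \<eta>"
    using norm_matrix_vector_mult_restrict_le[OF unit coh \<open>0 \<le> \<mu>\<close>, of h T] tube
    by (intro mult_mono') auto
  finally show ?thesis .
qed

lemma l1norm_restrict_vec_mult_l1norm_le:
  fixes h :: "real^'n" and T :: "'n set"
  defines "s \<equiv> real (card T)"
  assumes w: "0 \<le> w" "w \<le> 1"
    and \<alpha>: "0 \<le> \<alpha>" "real (card (T \<inter> T0)) \<le> \<alpha> * s"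
    and cone: "l1norm h \<le> (1 - w) * l1norm (restrict_vec h T)
                            + 2 * w * l1norm (restrict_vec h (T \<inter> T0)) + 2 * \<sigma>"
    and "0 \<le> \<sigma>"
  shows "l1norm (restrict_vec h T) * l1norm h
           \<le> (1 - w + 2 * w * sqrt \<alpha>) * s * (norm (restrict_vec h T))\<^sup>2
              + 2 * sqrt s * norm (restrict_vec h T) * \<sigma>"
proof -
  define b where "b = norm (restrict_vec h T)"
  define a where "a = l1norm (restrict_vec h T)"
  define a1 where "a1 = l1norm (restrict_vec h (T \<inter> T0))"
  have "0 \<le> a" "0 \<le> a1"
    by (simp_all add: a_def a1_def l1norm_def sum_nonneg)
  have a: "a \<le> sqrt s * b"
    using l1norm_restrict_vec_le[of h T] by (simp add: a_def b_def s_def)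
  have a1: "a1 \<le> sqrt \<alpha> * sqrt s * b"
  proof -
    have "a1 \<le> sqrt (card (T \<inter> T0)) * norm (restrict_vec h (T \<inter> T0))"
      unfolding a1_def by (rule l1norm_restrict_vec_le)
    also have "\<dots> \<le> sqrt (\<alpha> * s) * b"
      unfolding b_def using \<alpha> by (intro mult_mono norm_restrict_vec_mono) auto
    finally show ?thesis
      by (simp add: real_sqrt_mult)
  qed
  have "a * l1norm h \<le> a * ((1 - w) * a + 2 * w * a1 + 2 * \<sigma>)"
    using cone \<open>0 \<le> a\<close> by (intro mult_left_mono) (simp_all add: a_def a1_def)
  also have "\<dots> = (1 - w) * (a * a) + 2 * w * (a * a1) + 2 * \<sigma> * a"
    by (simp add: algebra_simps)
  also have "\<dots> \<le> (1 - w) * (s * b\<^sup>2) + 2 * w * (sqrt \<alpha> * s * b\<^sup>2) + 2 * \<sigma> * (sqrt s * b)"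
  proof -
    have "a * a \<le> (sqrt s * b) * (sqrt s * b)"
      using a \<open>0 \<le> a\<close> by (intro mult_mono) auto
    moreover have "a * a1 \<le> (sqrt s * b) * (sqrt \<alpha> * sqrt s * b)"
      using a a1 \<open>0 \<le> a\<close> \<open>0 \<le> a1\<close> by (intro mult_mono) auto
    ultimately show ?thesis
      using w \<open>0 \<le> \<sigma>\<close> a
      by (intro add_mono mult_left_mono) (auto simp: s_def power2_eq_square mult_ac)
  qed
  finally show ?thesis
    by (simp add: a_def b_def algebra_simps)
qed

lemma norm_restrict_vec_error_le:
  fixes A :: "real^'n^'m" and h :: "real^'n" and T :: "'n set" and \<mu> w \<alpha> :: real
  defines "s \<equiv> real (card T)"
  defines "D \<equiv> 1 + \<mu> + w * \<mu> * sqrt s - \<mu> * s * (2 * w * sqrt \<alpha> + 1)"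
  assumes unit: "\<And>i. norm (column i A) = 1"
    and coh: "\<And>i j. i \<noteq> j \<Longrightarrow> \<bar>column i A \<bullet> column j A\<bar> \<le> \<mu>"
    and \<mu>: "0 \<le> \<mu>" "\<mu> \<le> 1"
      \<comment> \<open>\<open>\<mu> \<le> 1\<close> matters only for \<open>T = {}\<close>, where it keeps the square root nonnegative\<close>
    and w: "0 \<le> w" "w \<le> 1"
    and \<alpha>: "0 \<le> \<alpha>" "real (card (T \<inter> T0)) \<le> \<alpha> * s"
    and tube: "norm (A *v h) \<le> \<eta>"
    and cone: "l1norm h \<le> (1 - w) * l1norm (restrict_vec h T)
                            + 2 * w * l1norm (restrict_vec h (T \<inter> T0)) + 2 * \<sigma>"
    and "0 \<le> \<sigma>"
    and "0 < D"
  shows "norm (restrict_vec h T) \<le> (sqrt (1 + (s - 1) * \<mu>) * \<eta> + 2 * \<mu> * sqrt s * \<sigma>) / D"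
proof -
  define b where "b = norm (restrict_vec h T)"
  define Q where "Q = sqrt (1 + (s - 1) * \<mu>)"
  have "\<mu> * (l1norm (restrict_vec h T) * l1norm h)
      \<le> \<mu> * ((1 - w + 2 * w * sqrt \<alpha>) * s * b\<^sup>2 + 2 * sqrt s * b * \<sigma>)"
    using l1norm_restrict_vec_mult_l1norm_le[OF w \<alpha>[unfolded s_def] cone \<open>0 \<le> \<sigma>\<close>] \<mu>
    by (intro mult_left_mono) (auto simp: b_def s_def)
  with inner_restrict_vec_coherence_le[OF unit coh \<mu>(1) tube, of T]
  have "(1 + \<mu> + w * \<mu> * s - \<mu> * s * (2 * w * sqrt \<alpha> + 1)) * b\<^sup>2
      \<le> b * (Q * \<eta> + 2 * \<mu> * sqrt s * \<sigma>)"
    by (simp add: b_def Q_def s_def algebra_simps)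
  moreover have "D \<le> 1 + \<mu> + w * \<mu> * s - \<mu> * s * (2 * w * sqrt \<alpha> + 1)"
    \<comment> \<open>the stated denominator \<open>D\<close> only has \<open>sqrt s\<close> where the argument allows \<open>s\<close>\<close>
  proof -
    have "sqrt s \<le> s"
      using le_square[of "card T"]
      by (intro real_le_lsqrt) (auto simp: s_def power2_eq_square simp flip: of_nat_mult)
    then show ?thesis
      using w \<mu> by (simp add: D_def mult_left_mono)
  qed
  ultimately have "D * b\<^sup>2 \<le> b * (Q * \<eta> + 2 * \<mu> * sqrt s * \<sigma>)"
    by (smt (verit) mult_right_mono zero_le_power2)
  moreover have "0 \<le> Q * \<eta> + 2 * \<mu> * sqrt s * \<sigma>"
  proof -
    have "0 \<le> 1 + (s - 1) * \<mu>"
      using \<mu> by (cases "card T") (auto simp: s_def)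
    moreover have "0 \<le> \<eta>"
      using tube norm_ge_zero order_trans by blast
    ultimately show ?thesis
      using \<mu> \<open>0 \<le> \<sigma>\<close> by (simp add: Q_def s_def)
  qed
  ultimately have "D * b \<le> Q * \<eta> + 2 * \<mu> * sqrt s * \<sigma>"
    by (cases "b = 0") (auto simp: b_def power2_eq_square mult.assoc)
  then show ?thesis
    using \<open>0 < D\<close> by (simp add: b_def Q_def field_simps)
qed

lemma quadratic_less_of_less_root:
  fixes c t w K :: real
  assumes "0 < c" "0 \<le> t" "0 < K"
    and root: "2 * c * t < w + sqrt (w\<^sup>2 + 4 * c * K)"
  shows "c * t\<^sup>2 - w * t < K"
proof (cases "2 * c * t \<le> w")
  case True
  then have "c * t\<^sup>2 - w * t \<le> - c * t\<^sup>2"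
    using \<open>0 \<le> t\<close> mult_right_mono[OF True \<open>0 \<le> t\<close>] by (simp add: power2_eq_square)
  also have "\<dots> \<le> 0"
    using \<open>0 < c\<close> by simp
  finally show ?thesis
    using \<open>0 < K\<close> by linarith
next
  case False
  have "(2 * c * t - w)\<^sup>2 < (sqrt (w\<^sup>2 + 4 * c * K))\<^sup>2"
    using False root by (intro power_strict_mono) auto
  also have "\<dots> = w\<^sup>2 + 4 * c * K"
    using assms by simp
  finally have "4 * c * (c * t\<^sup>2 - w * t) < 4 * c * K"
    by (simp add: power2_eq_square algebra_simps)
  then show ?thesis
    using \<open>0 < c\<close> by simp
qed

lemma denominator_pos_of_sparsity_bound:
  fixes \<mu> \<rho> \<alpha> w :: real and k :: nat
  assumes "0 \<le> \<mu>" "0 \<le> \<rho>" "0 \<le> \<alpha>" "0 \<le> w"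
    and bound:
      "\<rho> = 0 \<or>
       (if w > 0 then
          real k < ((1 / (2 * sqrt \<rho> * (2 * w * sqrt \<alpha> + 1))) *
                    (w + sqrt (w\<^sup>2 + 4 * (2 * w * sqrt \<alpha> + 1) * (1 + 1 / \<mu>))))\<^sup>2
        else real k < (1 / \<rho>) * (1 + 1 / \<mu>))"
  shows "0 < 1 + \<mu> + w * \<mu> * sqrt (\<rho> * k) - \<mu> * (\<rho> * k) * (2 * w * sqrt \<alpha> + 1)"
proof -
  define c where "c = 2 * w * sqrt \<alpha> + 1"
  define s where "s = \<rho> * k"
  define K where "K = 1 + 1 / \<mu>"
  have "0 \<le> 2 * w * sqrt \<alpha>"
    using assms by simp
  then have "0 < c" "0 \<le> s" "1 \<le> K"
    using assms(1,2) by (simp_all add: c_def s_def K_def)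
  have quadratic: "c * s - w * sqrt s < K"
  proof -
    consider "\<rho> = 0" | "0 < \<rho>" "0 < w" | "0 < \<rho>" "w = 0"
      using assms by linarith
    then show ?thesis
    proof cases
      case 1
      then show ?thesis
        using \<open>1 \<le> K\<close> by (simp add: s_def)
    next
      case 2
      define R where "R = sqrt (w\<^sup>2 + 4 * c * K)"
      define X where "X = (1 / (2 * sqrt \<rho> * c)) * (w + R)"
      have "0 \<le> X"
        using 2 \<open>0 < c\<close> \<open>1 \<le> K\<close> by (simp add: X_def R_def)
      have "real k < X\<^sup>2"
        using bound 2 by (simp add: X_def R_def c_def K_def)
      then have "sqrt (real k) < X"
        using \<open>0 \<le> X\<close> real_sqrt_less_mono by fastforce
      then have "sqrt s < sqrt \<rho> * X"
        using 2 by (simp add: s_def real_sqrt_mult)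
      also have "sqrt \<rho> * X = (w + R) / (2 * c)"
        using 2 \<open>0 < c\<close> by (simp add: X_def)
      finally have "2 * c * sqrt s < w + R"
        using \<open>0 < c\<close> by (simp add: field_simps)
      then have "c * (sqrt s)\<^sup>2 - w * sqrt s < K"
        using \<open>0 < c\<close> \<open>0 \<le> s\<close> \<open>1 \<le> K\<close>
        by (intro quadratic_less_of_less_root) (auto simp: R_def)
      then show ?thesis
        using \<open>0 \<le> s\<close> by simp
    next
      case 3
      then show ?thesis
        using bound by (simp add: c_def s_def K_def field_simps)
    qed
  qed
  show ?thesis
  proof (cases "\<mu> = 0")
    case False
    then have "\<mu> * (c * s - w * sqrt s) < \<mu> * K"
      using quadratic \<open>0 \<le> \<mu>\<close> by simp
    then show ?thesis
      using False by (simp add: c_def s_def K_def algebra_simps)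
  qed simp
qed

theorem theorem6:
  fixes A :: "real^'n^'m" and x xk xstar :: "real^'n" and y :: "real^'m"
    and eps rho alpha w :: real and k :: nat and T :: "'n set"
  assumes mn: "CARD('m) < CARD('n)"
    and unit_cols: "\<forall>i. norm (column i A) = 1"
    and noise: "norm (y - A *v x) \<le> eps"
    and kpos: "k > 0"
    and best: "best_k_term x k xk"
    and rho_nonneg: "rho \<ge> 0"
    and alpha_range: "0 \<le> alpha" "alpha \<le> 1"
    and cardT: "real (card T) = rho * real k"
    and cardTT0: "real (card (T \<inter> supp_vec xk)) = alpha * rho * real k"
    and w_range: "0 \<le> w" "w \<le> 1"
    and xstar_feas: "norm (y - A *v xstar) \<le> eps"
    and xstar_min: "\<forall>z. norm (y - A *v z) \<le> eps \<longrightarrow> wl1norm w T xstar \<le> wl1norm w T z"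
    and kbound:
      "rho = 0 \<or>
       (if w > 0 then
          real k < ((1 / (2 * sqrt rho * (2 * w * sqrt alpha + 1))) *
                    (w + sqrt (w\<^sup>2 + 4 * (2 * w * sqrt alpha + 1) *
                                  (1 + 1 / mutual_coherence A))))\<^sup>2
        else real k < (1 / rho) * (1 + 1 / mutual_coherence A))"
  shows
    "let \<mu> = mutual_coherence A;
         T0 = supp_vec xk;
         D = 1 + \<mu> + w * \<mu> * sqrt (rho * k) - \<mu> * rho * k * (2 * w * sqrt alpha + 1);
         C0 = 2 * sqrt (1 + (rho * k - 1) * \<mu>) / D;
         C1 = 2 * \<mu> * sqrt (rho * k) / D
     in norm (restrict_vec xstar T - restrict_vec x T)
        \<le> C0 * eps + C1 * (w * l1norm (x - xk)
                            + (1 - w) * l1norm (restrict_vec x (- T \<inter> - T0))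
                            + l1norm (restrict_vec x (- T \<inter> T0)))"
proof -
  define \<mu> where "\<mu> = mutual_coherence A"
  define T0 where "T0 = supp_vec xk"
  define P where "P = w * l1norm (x - xk) + (1 - w) * l1norm (restrict_vec x (- T \<inter> - T0))
                        + l1norm (restrict_vec x (- T \<inter> T0))"
  have "0 < CARD('m)"
    by (simp add: finite_UNIV_card_ge_0)
  with mn have "1 < CARD('n)"
    by linarith
  then have \<mu>: "0 \<le> \<mu>" "\<mu> \<le> 1"
    unfolding \<mu>_def by (rule mutual_coherence_nonneg mutual_coherence_le_1)+
  have coh: "\<bar>column i A \<bullet> column j A\<bar> \<le> \<mu>" if "i \<noteq> j" for i j
    using abs_inner_column_le_mutual_coherence[OF that, of A] unit_cols by (simp add: \<mu>_def)
  have tube: "norm (A *v (xstar - x)) \<le> 2 * eps"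
    using norm_triangle_ineq4[of "y - A *v x" "y - A *v xstar"] noise xstar_feas
    by (simp add: matrix_vector_mult_diff_distrib)
  obtain S where "xk = restrict_vec x S"
    using best unfolding best_k_term_def by blast
  then have cone: "l1norm (xstar - x) \<le> (1 - w) * l1norm (restrict_vec (xstar - x) T)
      + 2 * w * l1norm (restrict_vec (xstar - x) (T \<inter> T0)) + 2 * P"
    using l1norm_le_of_wl1norm_le[OF w_range, of T x "xstar - x" T0] xstar_min noise
    by (simp add: P_def T0_def l1norm_tail_restrict_vec_eq)
  have "0 \<le> P"
    using w_range by (simp add: P_def l1norm_def sum_nonneg)
  have "0 < 1 + \<mu> + w * \<mu> * sqrt (card T) - \<mu> * card T * (2 * w * sqrt alpha + 1)"
    using denominator_pos_of_sparsity_bound[OF \<mu>(1) rho_nonneg alpha_range(1) w_range(1)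
        kbound[folded \<mu>_def]]
    by (simp add: cardT)
  from norm_restrict_vec_error_le[OF unit_cols[rule_format] coh \<mu> w_range alpha_range(1) _ tube cone
      \<open>0 \<le> P\<close> this]
  have "norm (restrict_vec (xstar - x) T)
      \<le> (sqrt (1 + (rho * k - 1) * \<mu>) * (2 * eps) + 2 * \<mu> * sqrt (rho * k) * P)
          / (1 + \<mu> + w * \<mu> * sqrt (rho * k) - \<mu> * (rho * k) * (2 * w * sqrt alpha + 1))"
    using cardTT0 cardT by (simp add: T0_def)
  moreover have "restrict_vec xstar T - restrict_vec x T = restrict_vec (xstar - x) T"
    by (simp add: vec_eq_iff)
  ultimately show ?thesis
    by (simp add: Let_def \<mu>_def T0_def P_def add_divide_distrib mult_ac)
qed

end
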